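(* Let $G^1_k$ be the line policy graph on the domain $[k]=\{1,\dots,k\}$ (edges $(i,i+1)$ for $1\le i<k$, no vertex $\bot$), and let $\mathbf{R}_k$ be the workload of all one-dimensional range queries $\mathbf{q}(l,r)\mathbf{x}=\sum_{l\le i\le r}\mathbf{x}_i$, $1\le l\le r\le k$. Consider the mechanism that, on database $\mathbf{x}\in\mathbb{R}^k$ of (publicly known) size $n$, computes the prefix sums $s_i=\sum_{j\le i}\mathbf{x}_j$ for $1\le i\le k-1$, releases $\tilde s_i=s_i+\eta_i$ with $\eta_i$ independent $\mathrm{Lap}(1/\epsilon)$ random variables, sets $\tilde s_0=0$, $\tilde s_k=n$, and answers each query $\mathbf{q}(l,r)$ by $\tilde s_r-\tilde s_{l-1}$. This mechanism satisfies $(\epsilon,G^1_k)$-Blowfish privacy and answers $\mathbf{R}_k$ with $\Theta(1/\epsilon^2)$ error per query.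
   Context: Databases are histogram vectors $\mathbf{x}\in\mathbb{R}^k$ over $[k]$. Under $G^1_k$, two databases are neighbors iff they have the same size and differ in the value of exactly one record, which is $i$ in one and $i+1$ in the other. A mechanism $\mathcal{M}$ satisfies $(\epsilon,G)$-Blowfish privacy if $\Pr[\mathcal{M}(\mathbf{x})\in S]\le e^\epsilon\Pr[\mathcal{M}(\mathbf{x}')\in S]$ for all output sets $S$ and all neighbors $\mathbf{x},\mathbf{x}'$. $\mathrm{Lap}(\lambda)$ has density proportional to $\exp(-|t|/\lambda)$. The error per query is the data-independent mean squared error $\max_{\mathbf{x}}\sum_{\mathbf{q}\in\mathbf{R}_k}\mathbb{E}[(\mathbf{q}\mathbf{x}-\mathcal{M}(\mathbf{q},\mathbf{x}))^2]$ divided by the number of queries. *)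

theory Defs
  imports "HOL-Probability.Probability"
begin

text \<open>Databases are histograms over the domain [k] = {1..k}, represented as
  functions x :: nat => real (only the values at 1..k matter).\<close>

definition lap :: "real \<Rightarrow> real measure" where
  "lap b = density lborel (\<lambda>t. ennreal (exp (- \<bar>t\<bar> / b) / (2 * b)))"

definition noise :: "nat \<Rightarrow> real \<Rightarrow> (nat \<Rightarrow> real) measure" where
  "noise k \<epsilon> = PiM {1..<k} (\<lambda>_. lap (1 / \<epsilon>))"

definition range_queries :: "nat \<Rightarrow> (nat \<times> nat) set" where
  "range_queries k = {(l, r). 1 \<le> l \<and> l \<le> r \<and> r \<le> k}"

definition range_query :: "nat \<Rightarrow> nat \<Rightarrow> (nat \<Rightarrow> real) \<Rightarrow> real" where
  "range_query l r x = (\<Sum>i=l..r. x i)"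

definition db_size :: "nat \<Rightarrow> (nat \<Rightarrow> real) \<Rightarrow> real" where
  "db_size k x = (\<Sum>i=1..k. x i)"

definition prefix_sum :: "(nat \<Rightarrow> real) \<Rightarrow> nat \<Rightarrow> real" where
  "prefix_sum x i = (\<Sum>j=1..i. x j)"

definition noisy_prefix :: "nat \<Rightarrow> (nat \<Rightarrow> real) \<Rightarrow> (nat \<Rightarrow> real) \<Rightarrow> nat \<Rightarrow> real" where
  "noisy_prefix k x \<eta> i =
     (if i = 0 then 0 else if i = k then db_size k x else prefix_sum x i + \<eta> i)"

definition answer_space :: "nat \<Rightarrow> (nat \<times> nat \<Rightarrow> real) measure" where
  "answer_space k = PiM (range_queries k) (\<lambda>_. lborel)"

definition prefix_mech :: "nat \<Rightarrow> real \<Rightarrow> (nat \<Rightarrow> real) \<Rightarrow> (nat \<times> nat \<Rightarrow> real) measure" where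
  "prefix_mech k \<epsilon> x =
     distr (noise k \<epsilon>) (answer_space k)
       (\<lambda>\<eta>. \<lambda>q\<in>range_queries k. noisy_prefix k x \<eta> (snd q) - noisy_prefix k x \<eta> (fst q - 1))"

definition line_neighbors :: "nat \<Rightarrow> (nat \<Rightarrow> real) \<Rightarrow> (nat \<Rightarrow> real) \<Rightarrow> bool" where
  "line_neighbors k x x' \<longleftrightarrow>
     (\<exists>i. 1 \<le> i \<and> i < k \<and>
        (x' = x(i := x i - 1, Suc i := x (Suc i) + 1) \<or>
         x = x'(i := x' i - 1, Suc i := x' (Suc i) + 1)))"

definition blowfish_private ::
  "real \<Rightarrow> ('d \<Rightarrow> 'd \<Rightarrow> bool) \<Rightarrow> ('d \<Rightarrow> 'o measure) \<Rightarrow> bool" where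
  "blowfish_private \<epsilon> nb M \<longleftrightarrow>
     (\<forall>x x'. nb x x' \<longrightarrow>
        (\<forall>S \<in> sets (M x). measure (M x) S \<le> exp \<epsilon> * measure (M x') S))"

definition error_per_query :: "nat \<Rightarrow> real \<Rightarrow> real" where
  "error_per_query k \<epsilon> =
     (SUP x. (\<Sum>q\<in>range_queries k.
        \<integral>y. (range_query (fst q) (snd q) x - y q)\<^sup>2 \<partial>prefix_mech k \<epsilon> x))
     / real (card (range_queries k))"

end

theory Submission
  imports Defs
begin

text \<open>Moving one record from i to i + 1 changes only the prefix sum s_i, by one. Hence the
  mechanism on the neighbour is the mechanism on x with the Laplace noise on s_i shifted by one,
  and a unit shift changes the density of Lap(1/\<epsilon>) by a factor of at most e^\<epsilon>.
  The error of the answer to q(l,r) is a difference of the noise on the endpoints s_(l-1) and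
  s_r, which are independent and carry variance 2/\<epsilon>^2 each unless they are the exact values
  s_0 = 0 or s_k = n. So every query has mean squared error between 2/\<epsilon>^2 and 4/\<epsilon>^2,
  except q(1,k), which is answered exactly; averaging over at least two queries gives
  a per-query error between 1/\<epsilon>^2 and 4/\<epsilon>^2.\<close>

definition laplace_density :: "real \<Rightarrow> real \<Rightarrow> real" where
  "laplace_density b t = exp (- \<bar>t\<bar> / b) / (2 * b)"

lemma laplace_density_nonneg: "0 < b \<Longrightarrow> 0 \<le> laplace_density b t"
  by (simp add: laplace_density_def)

lemma borel_measurable_laplace_density[measurable]: "laplace_density b \<in> borel_measurable borel"
  unfolding laplace_density_def by measurable

lemma lap_eq_density: "lap b = density lborel (\<lambda>t. ennreal (laplace_density b t))"
  by (simp add: lap_def laplace_density_def)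

lemma sets_lap[simp, measurable_cong]: "sets (lap b) = sets borel"
  by (simp add: lap_def)

lemma space_lap[simp]: "space (lap b) = UNIV"
  by (simp add: lap_def)

lemma laplace_density_shift_le:
  assumes "0 < b"
  shows "laplace_density b t \<le> exp (\<bar>c\<bar> / b) * laplace_density b (t - c)"
proof -
  have "- \<bar>t\<bar> / b \<le> \<bar>c\<bar> / b + - \<bar>t - c\<bar> / b"
    using assms by (simp add: field_simps)
  then show ?thesis
    using assms by (simp add: laplace_density_def exp_add[symmetric] divide_right_mono)
qed

lemma nn_integral_laplace_density_abs_power:
  assumes b: "0 < b"
  shows "(\<integral>\<^sup>+ t. ennreal (\<bar>t\<bar> ^ n * laplace_density b t) \<partial>lborel) = ennreal (fact n * b ^ n)"
proof -
  let ?h = "\<lambda>t. ennreal (\<bar>t\<bar> ^ n * laplace_density b t)"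
  have half_line: "(\<integral>\<^sup>+ t. ?h t * indicator {0..} t \<partial>lborel) = ennreal (fact n * b ^ n / 2)"
  proof -
    \<comment> \<open>on the half-line the density is half the Erlang density with rate 1/b\<close>
    have "?h t * indicator {0..} t = ennreal (1/2) * ennreal (erlang_density 0 (1/b) t * t ^ n)" for t
    proof (cases "t < 0")
      case False
      then have "?h t * indicator {0..} t = ennreal (1/2 * (erlang_density 0 (1/b) t * t ^ n))"
        using b by (simp add: laplace_density_def erlang_density_def field_simps)
      also have "\<dots> = ennreal (1/2) * ennreal (erlang_density 0 (1/b) t * t ^ n)"
        using False b by (intro ennreal_mult) (auto simp: erlang_density_def)
      finally show ?thesis .
    qed (simp add: erlang_density_def)
    then have "(\<integral>\<^sup>+ t. ?h t * indicator {0..} t \<partial>lborel)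
        = ennreal (1/2) * (\<integral>\<^sup>+ t. ennreal (erlang_density 0 (1/b) t * t ^ n) \<partial>lborel)"
      by (simp add: nn_integral_cmult)
    also have "\<dots> = ennreal (1/2) * ennreal (fact n / (1/b) ^ n)"
      using nn_integral_erlang_ith_moment[of "1/b" 0 n] b by simp
    also have "\<dots> = ennreal (fact n * b ^ n / 2)"
      using b by (subst ennreal_mult[symmetric]) (auto simp: power_one_over field_simps)
    finally show ?thesis .
  qed
  have "(\<integral>\<^sup>+ t. ?h t * indicator {..<0} t \<partial>lborel)
      = (\<integral>\<^sup>+ t. ?h (0 + -1 * t) * indicator {..<0} (0 + -1 * t) \<partial>lborel)"
    using nn_integral_real_affine[of "\<lambda>t. ?h t * indicator {..<0} t" "-1" 0] by simp
  also have "\<dots> = (\<integral>\<^sup>+ t. ?h t * indicator {0..} t \<partial>lborel)"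
    by (intro nn_integral_cong_AE, use AE_lborel_singleton[of 0] in eventually_elim)
      (auto simp: laplace_density_def split: split_indicator)
  finally have mirror: "(\<integral>\<^sup>+ t. ?h t * indicator {..<0} t \<partial>lborel) = ennreal (fact n * b ^ n / 2)"
    using half_line by simp
  have "(\<integral>\<^sup>+ t. ?h t \<partial>lborel)
      = (\<integral>\<^sup>+ t. ?h t * indicator {0..} t + ?h t * indicator {..<0} t \<partial>lborel)"
    by (intro nn_integral_cong) (auto split: split_indicator)
  also have "\<dots> = ennreal (fact n * b ^ n / 2) + ennreal (fact n * b ^ n / 2)"
    by (subst nn_integral_add) (auto simp: half_line mirror)
  finally show ?thesis
    using b by (simp flip: ennreal_plus)
qed

lemma prob_space_lap: "0 < b \<Longrightarrow> prob_space (lap b)"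
  using nn_integral_laplace_density_abs_power[of b 0]
  by (intro prob_spaceI) (simp add: lap_eq_density emeasure_density)

lemma has_bochner_integral_lap_square:
  assumes b: "0 < b"
  shows "has_bochner_integral (lap b) (\<lambda>t. t\<^sup>2) (2 * b\<^sup>2)"
  unfolding lap_eq_density
proof (rule has_bochner_integral_density)
  show "has_bochner_integral lborel (\<lambda>t. laplace_density b t *\<^sub>R t\<^sup>2) (2 * b\<^sup>2)"
    using b nn_integral_laplace_density_abs_power[OF b, of 2]
    by (intro has_bochner_integral_nn_integral) (auto simp: laplace_density_nonneg mult.commute)
qed (auto simp: b laplace_density_nonneg)

lemma has_bochner_integral_lap_id:
  assumes b: "0 < b"
  shows "has_bochner_integral (lap b) (\<lambda>t. t) 0"
  unfolding lap_eq_density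
proof (rule has_bochner_integral_density)
  have int: "integrable lborel (\<lambda>t. laplace_density b t * t)"
    using b nn_integral_laplace_density_abs_power[OF b, of 1]
    by (intro integrableI_bounded) (auto simp: laplace_density_nonneg abs_mult mult.commute)
  have "(\<integral>t. laplace_density b t * t \<partial>lborel)
      = \<bar>-1\<bar> *\<^sub>R (\<integral>t. laplace_density b (0 + -1 * t) * (0 + -1 * t) \<partial>lborel)"
    by (rule lborel_integral_real_affine) simp
  also have "\<dots> = - (\<integral>t. laplace_density b t * t \<partial>lborel)"
    by (simp add: laplace_density_def)
  finally show "has_bochner_integral lborel (\<lambda>t. laplace_density b t *\<^sub>R t) 0"
    using int by (simp add: has_bochner_integral_iff)
qed (auto simp: b laplace_density_nonneg)

lemma nn_integral_lap_shift_le: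
  assumes b: "0 < b" and f[measurable]: "f \<in> borel_measurable borel"
  shows "(\<integral>\<^sup>+ t. f t \<partial>lap b) \<le> ennreal (exp (\<bar>c\<bar> / b)) * (\<integral>\<^sup>+ t. f (t + c) \<partial>lap b)"
proof -
  have "(\<integral>\<^sup>+ t. f t \<partial>lap b) = (\<integral>\<^sup>+ t. ennreal (laplace_density b t) * f t \<partial>lborel)"
    unfolding lap_eq_density by (subst nn_integral_density) auto
  also have "\<dots> \<le> (\<integral>\<^sup>+ t. ennreal (exp (\<bar>c\<bar> / b)) * (ennreal (laplace_density b (t - c)) * f t) \<partial>lborel)"
  proof (intro nn_integral_mono)
    fix t
    have "ennreal (laplace_density b t) \<le> ennreal (exp (\<bar>c\<bar> / b) * laplace_density b (t - c))"
      using laplace_density_shift_le[OF b] by (rule ennreal_leI)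
    also have "\<dots> = ennreal (exp (\<bar>c\<bar> / b)) * ennreal (laplace_density b (t - c))"
      using b by (intro ennreal_mult) (auto simp: laplace_density_nonneg)
    finally show "ennreal (laplace_density b t) * f t
        \<le> ennreal (exp (\<bar>c\<bar> / b)) * (ennreal (laplace_density b (t - c)) * f t)"
      by (metis mult.assoc mult_right_mono zero_le)
  qed
  also have "\<dots> = ennreal (exp (\<bar>c\<bar> / b)) * (\<integral>\<^sup>+ t. ennreal (laplace_density b (t - c)) * f t \<partial>lborel)"
    by (intro nn_integral_cmult) auto
  also have "(\<integral>\<^sup>+ t. ennreal (laplace_density b (t - c)) * f t \<partial>lborel)
      = (\<integral>\<^sup>+ t. ennreal (laplace_density b (c + 1 * t - c)) * f (c + 1 * t) \<partial>lborel)"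
    using nn_integral_real_affine[of "\<lambda>t. ennreal (laplace_density b (t - c)) * f t" 1 c] by simp
  also have "\<dots> = (\<integral>\<^sup>+ t. f (t + c) \<partial>lap b)"
    unfolding lap_eq_density by (subst nn_integral_density) (auto simp: add.commute)
  finally show ?thesis .
qed

lemma measurable_coordinate_shift[measurable]:
  "i \<in> I \<Longrightarrow> (\<lambda>\<eta>::'i \<Rightarrow> real. \<eta>(i := \<eta> i + c)) \<in> measurable (PiM I (\<lambda>_. lap b)) (PiM I (\<lambda>_. lap b))"
proof (rule measurable_PiM_single')
  fix j assume "j \<in> I" "i \<in> I"
  then show "(\<lambda>\<eta>. (\<eta>(i := \<eta> i + c)) j) \<in> measurable (PiM I (\<lambda>_. lap b)) (lap b)"
    by (cases "j = i") auto
qed (auto simp: space_PiM PiE_iff)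

lemma emeasure_PiM_lap_shift_le:
  fixes I :: "'i set" and b :: real
  defines "P \<equiv> PiM I (\<lambda>_. lap b)"
  assumes I: "finite I" "i \<in> I" and b: "0 < b" and A: "A \<in> sets P"
  shows "emeasure P A \<le> ennreal (exp (\<bar>c\<bar> / b)) * emeasure P ((\<lambda>\<eta>. \<eta>(i := \<eta> i + c)) -` A \<inter> space P)"
proof -
  let ?T = "\<lambda>\<eta>::'i \<Rightarrow> real. \<eta>(i := \<eta> i + c)"
  obtain J where IJ: "I = insert i J" and iJ: "i \<notin> J"
    using mk_disjoint_insert[OF I(2)] by blast
  have J: "finite J" using I IJ by auto
  interpret product_sigma_finite "\<lambda>_. lap b"
    unfolding product_sigma_finite_def using prob_space_lap[OF b]
    by (simp add: prob_space_imp_sigma_finite)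
  have A_ins[measurable]: "A \<in> sets (PiM (insert i J) (\<lambda>_. lap b))"
    using A unfolding P_def IJ .
  have T[measurable]: "?T \<in> measurable P P"
    unfolding P_def using I(2) by (rule measurable_coordinate_shift)
  have "emeasure P A = (\<integral>\<^sup>+ \<eta>. indicator A \<eta> \<partial>P)"
    using A by simp
  also have "\<dots> = (\<integral>\<^sup>+ \<eta>. (\<integral>\<^sup>+ t. indicator A (\<eta>(i := t)) \<partial>lap b) \<partial>PiM J (\<lambda>_. lap b))"
    unfolding P_def IJ using J iJ by (subst product_nn_integral_insert) auto
  also have "\<dots> \<le> (\<integral>\<^sup>+ \<eta>. ennreal (exp (\<bar>c\<bar> / b)) * (\<integral>\<^sup>+ t. indicator A (\<eta>(i := t + c)) \<partial>lap b)
      \<partial>PiM J (\<lambda>_. lap b))"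
  proof (rule nn_integral_mono)
    fix \<eta> assume "\<eta> \<in> space (PiM J (\<lambda>_. lap b))"
    from measurable_component_update[OF this iJ]
    have "(\<lambda>t. \<eta>(i := t)) \<in> measurable borel (PiM (insert i J) (\<lambda>_. lap b))"
      by (simp cong: measurable_cong_sets)
    from measurable_comp[OF this borel_measurable_indicator[OF A_ins]]
    show "(\<integral>\<^sup>+ t. indicator A (\<eta>(i := t)) \<partial>lap b)
        \<le> ennreal (exp (\<bar>c\<bar> / b)) * (\<integral>\<^sup>+ t. indicator A (\<eta>(i := t + c)) \<partial>lap b)"
      by (intro nn_integral_lap_shift_le b) (simp add: comp_def)
  qed
  also have "\<dots> = ennreal (exp (\<bar>c\<bar> / b)) *
      (\<integral>\<^sup>+ \<eta>. (\<integral>\<^sup>+ t. indicator A (\<eta>(i := t + c)) \<partial>lap b) \<partial>PiM J (\<lambda>_. lap b))"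
    using iJ by (intro nn_integral_cmult) measurable
  also have "(\<integral>\<^sup>+ \<eta>. (\<integral>\<^sup>+ t. indicator A (\<eta>(i := t + c)) \<partial>lap b) \<partial>PiM J (\<lambda>_. lap b))
      = (\<integral>\<^sup>+ \<eta>. indicator A (?T \<eta>) \<partial>P)"
    unfolding P_def IJ using J iJ by (subst product_nn_integral_insert) auto
  also have "\<dots> = (\<integral>\<^sup>+ \<eta>. indicator (?T -` A \<inter> space P) \<eta> \<partial>P)"
    by (intro nn_integral_cong) (auto split: split_indicator)
  also have "\<dots> = emeasure P (?T -` A \<inter> space P)"
    using measurable_sets[OF T A] by simp
  finally show ?thesis .
qed

lemma measure_distr_PiM_lap_shift_le:
  fixes I :: "'i set" and b :: real
  defines "P \<equiv> PiM I (\<lambda>_. lap b)"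
  assumes I: "finite I" "i \<in> I" and b: "0 < b"
    and G: "G \<in> measurable P M" and S: "S \<in> sets M"
  shows "measure (distr P M G) S \<le> exp (\<bar>c\<bar> / b) * measure (distr P M (\<lambda>\<eta>. G (\<eta>(i := \<eta> i + c)))) S"
proof -
  let ?T = "\<lambda>\<eta>::'i \<Rightarrow> real. \<eta>(i := \<eta> i + c)"
  interpret prob_space P
    unfolding P_def using I(1) by (intro prob_space_PiM prob_space_lap b)
  have T: "?T \<in> measurable P P"
    unfolding P_def using I(2) by (rule measurable_coordinate_shift)
  have GT: "(\<lambda>\<eta>. G (?T \<eta>)) \<in> measurable P M"
    using measurable_comp[OF T G] by (simp add: comp_def)
  have "emeasure P (G -` S \<inter> space P)
      \<le> ennreal (exp (\<bar>c\<bar> / b)) * emeasure P (?T -` (G -` S \<inter> space P) \<inter> space P)"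
    using emeasure_PiM_lap_shift_le[OF I b] measurable_sets[OF G S] unfolding P_def by blast
  moreover have "?T -` (G -` S \<inter> space P) \<inter> space P = (\<lambda>\<eta>. G (?T \<eta>)) -` S \<inter> space P"
    using measurable_space[OF T] by auto
  ultimately have "emeasure (distr P M G) S
      \<le> ennreal (exp (\<bar>c\<bar> / b)) * emeasure (distr P M (\<lambda>\<eta>. G (?T \<eta>))) S"
    by (simp add: emeasure_distr G GT S)
  then show ?thesis
    by (simp add: emeasure_distr G GT S emeasure_eq_measure measure_distr ennreal_le_iff
        flip: ennreal_mult)
qed

lemma (in product_prob_space)
  fixes f :: "_ \<Rightarrow> real"
  assumes i: "i \<in> I" and f: "integrable (M i) f"
  shows integrable_PiM_component: "integrable (PiM I M) (\<lambda>\<omega>. f (\<omega> i))"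
    and integral_PiM_component: "(\<integral>\<omega>. f (\<omega> i) \<partial>PiM I M) = integral\<^sup>L (M i) f"
proof -
  have comp: "(\<lambda>\<omega>. \<omega> i) \<in> measurable (PiM I M) (M i)"
    using i by simp
  show "integrable (PiM I M) (\<lambda>\<omega>. f (\<omega> i))"
    using f integrable_distr_eq[OF comp, of f] PiM_component[OF i] by simp
  show "(\<integral>\<omega>. f (\<omega> i) \<partial>PiM I M) = integral\<^sup>L (M i) f"
    using f integral_distr[OF comp, of f] PiM_component[OF i] by simp
qed

lemma (in finite_product_prob_space)
  fixes f g :: "_ \<Rightarrow> real"
  assumes ij: "i \<in> I" "j \<in> I" "i \<noteq> j" and f: "integrable (M i) f" and g: "integrable (M j) g"
  shows integrable_PiM_two_components: "integrable (PiM I M) (\<lambda>\<omega>. f (\<omega> i) * g (\<omega> j))"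
    and integral_PiM_two_components:
      "(\<integral>\<omega>. f (\<omega> i) * g (\<omega> j) \<partial>PiM I M) = integral\<^sup>L (M i) f * integral\<^sup>L (M j) g"
proof -
  define h where "h m = (if m = i then f else if m = j then g else (\<lambda>_. 1))" for m
  have h: "integrable (M m) (h m)" for m
    using f g by (auto simp: h_def)
  have prod: "f (\<omega> i) * g (\<omega> j) = (\<Prod>m\<in>I. h m (\<omega> m))" for \<omega>
  proof -
    have "(\<Prod>m\<in>I. h m (\<omega> m)) = (\<Prod>m\<in>{i, j}. h m (\<omega> m))"
      using ij finite_index by (intro prod.mono_neutral_right) (auto simp: h_def)
    then show ?thesis
      using ij by (simp add: h_def)
  qed
  show "integrable (PiM I M) (\<lambda>\<omega>. f (\<omega> i) * g (\<omega> j))"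
    unfolding prod using finite_index h by (rule product_integrable_prod)
  have "(\<Prod>m\<in>I. integral\<^sup>L (M m) (h m)) = (\<Prod>m\<in>{i, j}. integral\<^sup>L (M m) (h m))"
    using ij finite_index by (intro prod.mono_neutral_right) (auto simp: h_def M.prob_space)
  then show "(\<integral>\<omega>. f (\<omega> i) * g (\<omega> j) \<partial>PiM I M) = integral\<^sup>L (M i) f * integral\<^sup>L (M j) g"
    unfolding prod product_integral_prod[OF finite_index h] using ij by (simp add: h_def)
qed

text \<open>Elements of a product space are undefined off the index set; there the noise is 0.\<close>
definition noise_at :: "'i set \<Rightarrow> ('i \<Rightarrow> real) \<Rightarrow> 'i \<Rightarrow> real" where
  "noise_at I \<eta> j = (if j \<in> I then \<eta> j else 0)"

lemma integral_PiM_noise_at_diff_square: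
  fixes M :: "real measure"
  assumes "prob_space M" "finite I" and jj': "j \<noteq> j'"
    and sq: "integrable M (\<lambda>t. t\<^sup>2)" and lin: "integrable M (\<lambda>t. t)"
    and mean: "integral\<^sup>L M (\<lambda>t. t) = 0"
  shows "(\<integral>\<eta>. (noise_at I \<eta> j - noise_at I \<eta> j')\<^sup>2 \<partial>PiM I (\<lambda>_. M))
       = (if j \<in> I then integral\<^sup>L M (\<lambda>t. t\<^sup>2) else 0) + (if j' \<in> I then integral\<^sup>L M (\<lambda>t. t\<^sup>2) else 0)"
proof -
  interpret M: prob_space M by fact
  interpret finite_product_prob_space "\<lambda>_. M" I
    by unfold_locales (auto simp: \<open>finite I\<close> M.sigma_finite_countable M.emeasure_space_1)
  let ?P = "PiM I (\<lambda>_. M)" and ?v = "integral\<^sup>L M (\<lambda>t. t\<^sup>2)"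
  have sq_int: "integrable ?P (\<lambda>\<eta>. (\<eta> m)\<^sup>2)" "(\<integral>\<eta>. (\<eta> m)\<^sup>2 \<partial>?P) = ?v" if "m \<in> I" for m
    using that sq by (auto intro: integrable_PiM_component integral_PiM_component)
  consider "j \<in> I" "j' \<in> I" | "j \<in> I" "j' \<notin> I" | "j \<notin> I" "j' \<in> I" | "j \<notin> I" "j' \<notin> I"
    by blast
  then show ?thesis
  proof cases
    case 1
    have cross: "integrable ?P (\<lambda>\<eta>. \<eta> j * \<eta> j')" "(\<integral>\<eta>. \<eta> j * \<eta> j' \<partial>?P) = 0"
      using 1 jj' lin mean integrable_PiM_two_components[of j j' "\<lambda>t. t" "\<lambda>t. t"]
        integral_PiM_two_components[of j j' "\<lambda>t. t" "\<lambda>t. t"] by auto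
    have "(\<lambda>\<eta>. (noise_at I \<eta> j - noise_at I \<eta> j')\<^sup>2) = (\<lambda>\<eta>. (\<eta> j)\<^sup>2 + (\<eta> j')\<^sup>2 - 2 * (\<eta> j * \<eta> j'))"
      using 1 by (auto simp: noise_at_def power2_eq_square algebra_simps)
    then show ?thesis
      using 1 sq_int cross by simp
  next
    case 2
    then show ?thesis using sq_int by (simp add: noise_at_def)
  next
    case 3
    then show ?thesis using sq_int by (simp add: noise_at_def)
  qed (simp add: noise_at_def)
qed

lemma borel_measurable_noise_at[measurable]:
  "(\<lambda>\<eta>. noise_at I \<eta> j) \<in> borel_measurable (PiM I (\<lambda>_. lap b))"
  by (cases "j \<in> I") (simp_all add: noise_at_def)

definition prefix_answers :: "nat \<Rightarrow> (nat \<Rightarrow> real) \<Rightarrow> (nat \<Rightarrow> real) \<Rightarrow> nat \<times> nat \<Rightarrow> real" where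
  "prefix_answers k x \<eta> =
     (\<lambda>q\<in>range_queries k. noisy_prefix k x \<eta> (snd q) - noisy_prefix k x \<eta> (fst q - 1))"

lemma prefix_mech_eq_distr: "prefix_mech k \<epsilon> x = distr (noise k \<epsilon>) (answer_space k) (prefix_answers k x)"
  unfolding prefix_mech_def prefix_answers_def ..

lemma db_size_eq_prefix_sum: "db_size k x = prefix_sum x k"
  by (simp add: db_size_def prefix_sum_def)

lemma noisy_prefix_eq_noise_at:
  "j \<le> k \<Longrightarrow> noisy_prefix k x \<eta> j = prefix_sum x j + noise_at {1..<k} \<eta> j"
  by (auto simp: noisy_prefix_def noise_at_def db_size_eq_prefix_sum prefix_sum_def)

lemma measurable_prefix_answers[measurable]:
  "prefix_answers k x \<in> measurable (noise k \<epsilon>) (answer_space k)"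
  unfolding noise_def answer_space_def prefix_answers_def
proof (rule measurable_restrict)
  fix q assume "q \<in> range_queries k"
  then have "snd q \<le> k" "fst q - 1 \<le> k"
    by (auto simp: range_queries_def)
  then show "(\<lambda>\<eta>. noisy_prefix k x \<eta> (snd q) - noisy_prefix k x \<eta> (fst q - 1))
      \<in> measurable (PiM {1..<k} (\<lambda>_. lap (1 / \<epsilon>))) lborel"
    by (simp add: noisy_prefix_eq_noise_at cong: measurable_cong_sets)
qed

lemma range_query_eq_prefix_sum_diff:
  assumes "1 \<le> l" "l \<le> r"
  shows "range_query l r x = prefix_sum x r - prefix_sum x (l - 1)"
proof -
  have "prefix_sum x r = prefix_sum x (l - 1) + range_query l r x"
    unfolding prefix_sum_def range_query_def using assms
    by (subst sum.atLeastLessThan_concat[of 1 l "Suc r", simplified atLeastLessThanSuc_atLeastAtMost,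
        symmetric]) (auto simp: atLeastLessThanSuc_atLeastAtMost[symmetric])
  then show ?thesis by simp
qed

lemma prefix_sum_move:
  assumes "1 \<le> i"
  shows "prefix_sum (x(i := x i - 1, Suc i := x (Suc i) + 1)) j = prefix_sum x j - (if j = i then 1 else 0)"
proof -
  have "prefix_sum (x(i := x i - 1, Suc i := x (Suc i) + 1)) j
      = (\<Sum>m=1..j. x m - (if m = i then 1 else 0) + (if m = Suc i then 1 else 0))"
    unfolding prefix_sum_def by (intro sum.cong) auto
  also have "\<dots> = prefix_sum x j - (\<Sum>m=1..j. if m = i then 1 else 0) + (\<Sum>m=1..j. if m = Suc i then 1 else 0)"
    unfolding prefix_sum_def by (simp add: sum.distrib sum_subtractf)
  finally show ?thesis
    using assms by simp
qed

lemma prefix_answers_move: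
  assumes "1 \<le> i" "i < k"
  shows "prefix_answers k (x(i := x i - 1, Suc i := x (Suc i) + 1)) \<eta>
       = prefix_answers k x (\<eta>(i := \<eta> i - 1))"
proof -
  have "noisy_prefix k (x(i := x i - 1, Suc i := x (Suc i) + 1)) \<eta> j
      = noisy_prefix k x (\<eta>(i := \<eta> i - 1)) j" for j
    using assms by (auto simp: noisy_prefix_def db_size_eq_prefix_sum prefix_sum_move)
  then show ?thesis
    unfolding prefix_answers_def by simp
qed

lemma prefix_mech_move_le:
  fixes x :: "nat \<Rightarrow> real"
  assumes \<epsilon>: "0 < \<epsilon>" and i: "1 \<le> i" "i < k" and S: "S \<in> sets (answer_space k)"
  defines "x' \<equiv> x(i := x i - 1, Suc i := x (Suc i) + 1)"
  shows "measure (prefix_mech k \<epsilon> x) S \<le> exp \<epsilon> * measure (prefix_mech k \<epsilon> x') S"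
    and "measure (prefix_mech k \<epsilon> x') S \<le> exp \<epsilon> * measure (prefix_mech k \<epsilon> x) S"
proof -
  have iI: "finite {1..<k}" "i \<in> {1..<k}" and b: "0 < 1 / \<epsilon>"
    using i \<epsilon> by auto
  have shift: "measure (prefix_mech k \<epsilon> y) S
      \<le> exp \<epsilon> * measure (distr (noise k \<epsilon>) (answer_space k) (\<lambda>\<eta>. prefix_answers k y (\<eta>(i := \<eta> i + c)))) S"
    if "\<bar>c\<bar> = 1" for y c
    using measure_distr_PiM_lap_shift_le[OF iI b measurable_prefix_answers[unfolded noise_def] S, where c=c] that
    by (simp add: prefix_mech_eq_distr noise_def)
  have "prefix_answers k x' = (\<lambda>\<eta>. prefix_answers k x (\<eta>(i := \<eta> i - 1)))"
    unfolding x'_def by (rule ext) (rule prefix_answers_move[OF i])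
  then show "measure (prefix_mech k \<epsilon> x) S \<le> exp \<epsilon> * measure (prefix_mech k \<epsilon> x') S"
    using shift[of "-1" x] by (simp add: prefix_mech_eq_distr)
  have "prefix_answers k x' (\<eta>(i := \<eta> i + 1)) = prefix_answers k x \<eta>" for \<eta>
    by (simp add: x'_def prefix_answers_move[OF i])
  then show "measure (prefix_mech k \<epsilon> x') S \<le> exp \<epsilon> * measure (prefix_mech k \<epsilon> x) S"
    using shift[of 1 x'] by (simp add: prefix_mech_eq_distr)
qed

lemma blowfish_private_prefix_mech:
  "0 < \<epsilon> \<Longrightarrow> blowfish_private \<epsilon> (line_neighbors k) (prefix_mech k \<epsilon>)"
  unfolding blowfish_private_def line_neighbors_def
  using prefix_mech_move_le by (auto simp: prefix_mech_eq_distr)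

text \<open>Each of the endpoints s_(l-1), s_r other than the exact s_0 and s_k carries a
  Lap(1/\<epsilon>) variable, of variance 2/\<epsilon>^2.\<close>
definition query_error :: "nat \<Rightarrow> real \<Rightarrow> nat \<Rightarrow> nat \<Rightarrow> real" where
  "query_error k \<epsilon> l r = (if l \<noteq> 1 then 2 / \<epsilon>\<^sup>2 else 0) + (if r \<noteq> k then 2 / \<epsilon>\<^sup>2 else 0)"

lemma integral_prefix_mech_query:
  assumes \<epsilon>: "0 < \<epsilon>" and q: "(l, r) \<in> range_queries k"
  shows "(\<integral>y. (range_query l r x - y (l, r))\<^sup>2 \<partial>prefix_mech k \<epsilon> x) = query_error k \<epsilon> l r"
proof -
  let ?I = "{1..<k}"
  have lr: "1 \<le> l" "l \<le> r" "r \<le> k"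
    using q by (auto simp: range_queries_def)
  have "(\<lambda>y. (range_query l r x - y (l, r))\<^sup>2) \<in> borel_measurable (answer_space k)"
    unfolding answer_space_def using q by measurable
  then have "(\<integral>y. (range_query l r x - y (l, r))\<^sup>2 \<partial>prefix_mech k \<epsilon> x)
      = (\<integral>\<eta>. (range_query l r x - prefix_answers k x \<eta> (l, r))\<^sup>2 \<partial>noise k \<epsilon>)"
    unfolding prefix_mech_eq_distr by (rule integral_distr[OF measurable_prefix_answers])
  also have "\<dots> = (\<integral>\<eta>. (noise_at ?I \<eta> (l - 1) - noise_at ?I \<eta> r)\<^sup>2 \<partial>PiM ?I (\<lambda>_. lap (1 / \<epsilon>)))"
    unfolding noise_def using q lr
    by (intro Bochner_Integration.integral_cong refl)
      (simp add: prefix_answers_def noisy_prefix_eq_noise_at range_query_eq_prefix_sum_diff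
        power2_commute[of "noise_at ?I _ (l - 1)"])
  also have "\<dots> = query_error k \<epsilon> l r"
    using \<epsilon> lr prob_space_lap[of "1 / \<epsilon>"] has_bochner_integral_lap_square[of "1 / \<epsilon>"]
      has_bochner_integral_lap_id[of "1 / \<epsilon>"]
    by (subst integral_PiM_noise_at_diff_square)
      (auto simp: has_bochner_integral_iff query_error_def power_one_over)
  finally show ?thesis .
qed

lemma finite_range_queries: "finite (range_queries k)"
  by (rule finite_subset[of _ "{1..k} \<times> {1..k}"]) (auto simp: range_queries_def)

lemma error_per_query_eq:
  "0 < \<epsilon> \<Longrightarrow> error_per_query k \<epsilon>
     = (\<Sum>q\<in>range_queries k. query_error k \<epsilon> (fst q) (snd q)) / real (card (range_queries k))"
proof -
  assume "0 < \<epsilon>"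
  then have "(\<Sum>q\<in>range_queries k. \<integral>y. (range_query (fst q) (snd q) x - y q)\<^sup>2 \<partial>prefix_mech k \<epsilon> x)
      = (\<Sum>q\<in>range_queries k. query_error k \<epsilon> (fst q) (snd q))" for x
    by (intro sum.cong refl) (auto simp: integral_prefix_mech_query)
  then show ?thesis
    unfolding error_per_query_def by simp
qed

lemma error_per_query_bounds:
  assumes k: "2 \<le> k" and \<epsilon>: "0 < \<epsilon>"
  shows "1 / \<epsilon>\<^sup>2 \<le> error_per_query k \<epsilon>" "error_per_query k \<epsilon> \<le> 4 / \<epsilon>\<^sup>2"
proof -
  let ?R = "range_queries k"
  let ?E = "\<Sum>q\<in>?R. query_error k \<epsilon> (fst q) (snd q)"
  have whole: "(1, k) \<in> ?R" and "(1, 1) \<in> ?R"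
    using k by (auto simp: range_queries_def)
  then have "card {(1::nat, k), (1, 1)} \<le> card ?R"
    by (intro card_mono[OF finite_range_queries]) auto
  then have card: "2 \<le> card ?R"
    using k by simp
  have "?E \<le> (\<Sum>q\<in>?R. 4 / \<epsilon>\<^sup>2)"
    by (intro sum_mono) (auto simp: query_error_def divide_right_mono)
  then show "error_per_query k \<epsilon> \<le> 4 / \<epsilon>\<^sup>2"
    using card \<epsilon> by (simp add: error_per_query_eq divide_le_eq mult.commute)
  \<comment> \<open>only the whole-domain query is answered exactly\<close>
  have "(\<Sum>q\<in>?R - {(1, k)}. 2 / \<epsilon>\<^sup>2) \<le> (\<Sum>q\<in>?R - {(1, k)}. query_error k \<epsilon> (fst q) (snd q))"
    by (intro sum_mono) (auto simp: query_error_def)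
  also have "\<dots> \<le> ?E"
    using \<epsilon> by (intro sum_mono2 finite_range_queries) (auto simp: query_error_def)
  finally have "real (card ?R - 1) * (2 / \<epsilon>\<^sup>2) \<le> ?E"
    using whole finite_range_queries by simp
  moreover have "real (card ?R) * (1 / \<epsilon>\<^sup>2) \<le> real (card ?R - 1) * (2 / \<epsilon>\<^sup>2)"
    using card \<epsilon> by (simp add: of_nat_diff field_simps)
  ultimately have "real (card ?R) * (1 / \<epsilon>\<^sup>2) \<le> ?E"
    by linarith
  then show "1 / \<epsilon>\<^sup>2 \<le> error_per_query k \<epsilon>"
    using card \<epsilon> by (simp add: error_per_query_eq le_divide_eq mult.commute)
qed

theorem theorem5p2:
  shows "(\<forall>k \<ge> 1. \<forall>\<epsilon> > 0. blowfish_private \<epsilon> (line_neighbors k) (prefix_mech k \<epsilon>))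
       \<and> (\<exists>c1 c2. 0 < c1 \<and> 0 < c2 \<and>
            (\<forall>k \<ge> 2. \<forall>\<epsilon> > 0.
               c1 / \<epsilon>\<^sup>2 \<le> error_per_query k \<epsilon> \<and> error_per_query k \<epsilon> \<le> c2 / \<epsilon>\<^sup>2))"
  using blowfish_private_prefix_mech error_per_query_bounds
  by (intro conjI exI[of _ 1] exI[of _ 4]) auto

end
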